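(* Let $n_1,n_2\ge1$ be integers and let $X\sim\mathrm{Bino}(n_1,p_1)$ and $Y\sim\mathrm{Bino}(n_2,p_2)$ be independent, with parameter of interest $d=p_1-p_2\in[-1,1]$. Fix $\alpha\in[0,1]$. Let $S_d=\{0,\dots,n_1\}\times\{0,\dots,n_2\}$ and for $d_0\in[-1,1]$ let $D(d_0)=[0,1-d_0]$ if $d_0\in[0,1]$ and $D(d_0)=[-d_0,1]$ if $d_0\in[-1,0)$. Let $T_d:S_d\times[-1,1]\to\mathbb{R}$ be a test statistic satisfying $$T_d(x,y,d_0)=T_d(n_1-x,n_2-y,-d_0)\quad\text{for all }(x,y)\in S_d,\ d_0\in[-1,1].$$ Define $$h_d(x,y,d_0)=\sup_{p_2\in D(d_0)}\ \sum_{\{(u,v)\in S_d:\,T_d(u,v,d_0)\le T_d(x,y,d_0)\}} p_B(u,n_1,p_2+d_0)\,p_B(v,n_2,p_2),$$ and $C_d(x,y)=\overline{\{d_0\in[-1,1]: h_d(x,y,d_0)>\alpha\}}$, written $C_d(x,y)=[L_d(x,y),U_d(x,y)]$. Then $$U_d(x,y)=-L_d(n_1-x,n_2-y)\quad\text{for all }(x,y)\in S_d.$$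
   Context: $p_B(y,n,p)=\binom{n}{y}p^y(1-p)^{n-y}$ denotes the binomial probability mass function. For a set $A\subseteq\mathbb{R}$, $\overline{A}$ denotes the smallest closed simply connected set (i.e. closed interval) containing $A$. A small value of $T_d$ is regarded as evidence against $H_0:d=d_0$. *)

theory Defs
  imports "HOL-Analysis.Analysis"
begin

definition pB :: "nat \<Rightarrow> nat \<Rightarrow> real \<Rightarrow> real" where
  "pB y n p = real (n choose y) * p ^ y * (1 - p) ^ (n - y)"

definition Sd :: "nat \<Rightarrow> nat \<Rightarrow> (nat \<times> nat) set" where
  "Sd n1 n2 = {0..n1} \<times> {0..n2}"

definition Dset :: "real \<Rightarrow> real set" where
  "Dset d0 = (if 0 \<le> d0 then {0..1 - d0} else {-d0..1})"

definition hd :: "(nat \<Rightarrow> nat \<Rightarrow> real \<Rightarrow> real) \<Rightarrow> nat \<Rightarrow> nat \<Rightarrow> nat \<Rightarrow> nat \<Rightarrow> real \<Rightarrow> real" where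
  "hd T n1 n2 x y d0 =
     (SUP p2\<in>Dset d0. \<Sum>(u,v)\<in>{(u,v)\<in>Sd n1 n2. T u v d0 \<le> T x y d0}.
         pB u n1 (p2 + d0) * pB v n2 p2)"

definition Cd :: "real \<Rightarrow> (nat \<Rightarrow> nat \<Rightarrow> real \<Rightarrow> real) \<Rightarrow> nat \<Rightarrow> nat \<Rightarrow> nat \<Rightarrow> nat \<Rightarrow> real set" where
  "Cd \<alpha> T n1 n2 x y = closure (convex hull {d0 \<in> {-1..1}. hd T n1 n2 x y d0 > \<alpha>})"

definition Ld :: "real \<Rightarrow> (nat \<Rightarrow> nat \<Rightarrow> real \<Rightarrow> real) \<Rightarrow> nat \<Rightarrow> nat \<Rightarrow> nat \<Rightarrow> nat \<Rightarrow> real" where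
  "Ld \<alpha> T n1 n2 x y = Inf (Cd \<alpha> T n1 n2 x y)"

definition Ud :: "real \<Rightarrow> (nat \<Rightarrow> nat \<Rightarrow> real \<Rightarrow> real) \<Rightarrow> nat \<Rightarrow> nat \<Rightarrow> nat \<Rightarrow> nat \<Rightarrow> real" where
  "Ud \<alpha> T n1 n2 x y = Sup (Cd \<alpha> T n1 n2 x y)"

end

theory Submission
  imports Defs
begin

text \<open>Replacing an outcome \<open>(u, v)\<close> by \<open>(n1 - u, n2 - v)\<close> and the parameters \<open>(p1, p2)\<close> by
  \<open>(1 - p1, 1 - p2)\<close> leaves the product of binomial probabilities unchanged and turns
  \<open>d = p1 - p2\<close> into \<open>-d\<close>; the nuisance range \<open>D(-d0)\<close> is mapped onto \<open>D(d0)\<close>. By the symmetry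
  of \<open>T\<close>, the critical region of \<open>(n1 - x, n2 - y)\<close> at \<open>-d0\<close> is the complement image of the
  critical region of \<open>(x, y)\<close> at \<open>d0\<close>, so \<open>h\<^sub>d(n1 - x, n2 - y, -d0) = h\<^sub>d(x, y, d0)\<close>. Hence the
  acceptance sets, and with them their closed convex hulls, are reflections of each other.\<close>

definition critical_region ::
    "(nat \<Rightarrow> nat \<Rightarrow> real \<Rightarrow> real) \<Rightarrow> nat \<Rightarrow> nat \<Rightarrow> nat \<Rightarrow> nat \<Rightarrow> real \<Rightarrow> (nat \<times> nat) set" where
  "critical_region T n1 n2 x y d0 = {(u, v) \<in> Sd n1 n2. T u v d0 \<le> T x y d0}"

definition Sd_complement :: "nat \<Rightarrow> nat \<Rightarrow> nat \<times> nat \<Rightarrow> nat \<times> nat" where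
  "Sd_complement n1 n2 = (\<lambda>(u, v). (n1 - u, n2 - v))"

lemma pB_complement: "u \<le> n \<Longrightarrow> pB (n - u) n p = pB u n (1 - p)"
  unfolding pB_def by (simp add: binomial_symmetric[symmetric] mult.commute mult.left_commute)

lemma Dset_reflect: "(\<lambda>q. 1 - q) ` Dset (- d0) = Dset d0"
proof -
  have "(\<lambda>q::real. 1 - q) ` {a..b} = {1 - b..1 - a}" for a b
    by (auto simp: image_iff intro!: bexI[where x = "1 - _"])
  then show ?thesis unfolding Dset_def by auto
qed

lemma hd_critical_region:
  "hd T n1 n2 x y d0 =
     (SUP p2\<in>Dset d0. \<Sum>(u, v)\<in>critical_region T n1 n2 x y d0. pB u n1 (p2 + d0) * pB v n2 p2)"
  unfolding hd_def critical_region_def ..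

lemma Sd_complement_in_Sd: "w \<in> Sd n1 n2 \<Longrightarrow> Sd_complement n1 n2 w \<in> Sd n1 n2"
  by (auto simp: Sd_complement_def Sd_def)

lemma Sd_complement_involution: "w \<in> Sd n1 n2 \<Longrightarrow> Sd_complement n1 n2 (Sd_complement n1 n2 w) = w"
  by (auto simp: Sd_complement_def Sd_def)

lemma inj_on_Sd_complement: "inj_on (Sd_complement n1 n2) (Sd n1 n2)"
  by (metis Sd_complement_involution inj_onI)

lemma critical_region_complement:
  assumes symT: "\<And>x y d0. (x, y) \<in> Sd n1 n2 \<Longrightarrow> d0 \<in> {-1..1} \<Longrightarrow>
                 T x y d0 = T (n1 - x) (n2 - y) (- d0)"
    and xy: "(x, y) \<in> Sd n1 n2" and d0: "d0 \<in> {-1..1}"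
  shows "critical_region T n1 n2 (n1 - x) (n2 - y) (- d0) =
         Sd_complement n1 n2 ` critical_region T n1 n2 x y d0"
proof -
  have "(n1 - u, n2 - v) \<in> critical_region T n1 n2 (n1 - x) (n2 - y) (- d0) \<longleftrightarrow>
        (u, v) \<in> critical_region T n1 n2 x y d0" if "(u, v) \<in> Sd n1 n2" for u v
    using that symT[OF that d0] symT[OF xy d0] by (auto simp: critical_region_def Sd_def)
  moreover have "w \<in> Sd_complement n1 n2 ` Sd n1 n2" if "w \<in> Sd n1 n2" for w
    using that by (metis Sd_complement_in_Sd Sd_complement_involution image_eqI)
  ultimately show ?thesis
    by (fastforce simp: Sd_complement_def critical_region_def)
qed

lemma sum_pB_complement:
  assumes "A \<subseteq> Sd n1 n2"
  shows "(\<Sum>(u, v)\<in>Sd_complement n1 n2 ` A. pB u n1 (q - d) * pB v n2 q) =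
         (\<Sum>(u, v)\<in>A. pB u n1 ((1 - q) + d) * pB v n2 (1 - q))"
proof -
  have "inj_on (Sd_complement n1 n2) A"
    using inj_on_Sd_complement assms by (rule inj_on_subset)
  then have "(\<Sum>(u, v)\<in>Sd_complement n1 n2 ` A. pB u n1 (q - d) * pB v n2 q) =
             (\<Sum>(u, v)\<in>A. pB (n1 - u) n1 (q - d) * pB (n2 - v) n2 q)"
    by (simp add: sum.reindex) (simp add: Sd_complement_def case_prod_unfold)
  also have "\<dots> = (\<Sum>(u, v)\<in>A. pB u n1 ((1 - q) + d) * pB v n2 (1 - q))"
    using assms by (intro sum.cong) (auto simp: Sd_def pB_complement algebra_simps)
  finally show ?thesis .
qed

lemma hd_reflect:
  assumes symT: "\<And>x y d0. (x, y) \<in> Sd n1 n2 \<Longrightarrow> d0 \<in> {-1..1} \<Longrightarrow>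
                 T x y d0 = T (n1 - x) (n2 - y) (- d0)"
    and xy: "(x, y) \<in> Sd n1 n2" and d0: "d0 \<in> {-1..1}"
  shows "hd T n1 n2 (n1 - x) (n2 - y) (- d0) = hd T n1 n2 x y d0"
proof -
  let ?A = "critical_region T n1 n2 x y d0"
  have "?A \<subseteq> Sd n1 n2"
    by (auto simp: critical_region_def)
  moreover have "critical_region T n1 n2 (n1 - x) (n2 - y) (- d0) = Sd_complement n1 n2 ` ?A"
    using symT xy d0 by (rule critical_region_complement)
  ultimately have "hd T n1 n2 (n1 - x) (n2 - y) (- d0) =
             (SUP q\<in>Dset (- d0). \<Sum>(u, v)\<in>?A. pB u n1 ((1 - q) + d0) * pB v n2 (1 - q))"
    by (simp add: hd_critical_region sum_pB_complement)
  also have "\<dots> = (SUP p\<in>(\<lambda>q. 1 - q) ` Dset (- d0). \<Sum>(u, v)\<in>?A. pB u n1 (p + d0) * pB v n2 p)"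
    by (simp add: image_image)
  also have "\<dots> = hd T n1 n2 x y d0"
    by (simp add: Dset_reflect hd_critical_region)
  finally show ?thesis .
qed

lemma closure_convex_hull_uminus:
  fixes S :: "'a::euclidean_space set"
  shows "closure (convex hull (uminus ` S)) = uminus ` closure (convex hull S)"
  by (simp add: convex_hull_linear_image[OF linear_uminus, symmetric]
      closure_injective_linear_image[OF linear_uminus] inj_def)

lemma Cd_reflect:
  assumes symT: "\<And>x y d0. (x, y) \<in> Sd n1 n2 \<Longrightarrow> d0 \<in> {-1..1} \<Longrightarrow>
                 T x y d0 = T (n1 - x) (n2 - y) (- d0)"
    and xy: "(x, y) \<in> Sd n1 n2"
  shows "Cd \<alpha> T n1 n2 x y = uminus ` Cd \<alpha> T n1 n2 (n1 - x) (n2 - y)"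
proof -
  have "hd T n1 n2 (n1 - x) (n2 - y) d = hd T n1 n2 x y (- d)" if "d \<in> {-1..1}" for d
    using hd_reflect[where T = T, OF symT xy, of "- d"] that by simp
  then have "{d0 \<in> {-1..1}. \<alpha> < hd T n1 n2 x y d0} =
             uminus ` {d0 \<in> {-1..1}. \<alpha> < hd T n1 n2 (n1 - x) (n2 - y) d0}"
    by (auto simp: image_iff) (metis minus_minus atLeastAtMost_iff minus_le_iff le_minus_iff)
  then show ?thesis
    by (simp add: Cd_def closure_convex_hull_uminus)
qed

theorem proposition2:
  fixes n1 n2 :: nat and \<alpha> :: real and T :: "nat \<Rightarrow> nat \<Rightarrow> real \<Rightarrow> real"
  assumes "n1 \<ge> 1" and "n2 \<ge> 1"
    and "0 \<le> \<alpha>" and "\<alpha> \<le> 1"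
    and symT: "\<And>x y d0. (x, y) \<in> Sd n1 n2 \<Longrightarrow> d0 \<in> {-1..1} \<Longrightarrow>
                 T x y d0 = T (n1 - x) (n2 - y) (- d0)"
  shows "\<forall>(x, y) \<in> Sd n1 n2. Ud \<alpha> T n1 n2 x y = - Ld \<alpha> T n1 n2 (n1 - x) (n2 - y)"
proof clarify
  fix x y assume xy: "(x, y) \<in> Sd n1 n2"
  have "Cd \<alpha> T n1 n2 x y = uminus ` Cd \<alpha> T n1 n2 (n1 - x) (n2 - y)"
    using symT xy by (rule Cd_reflect)
  then show "Ud \<alpha> T n1 n2 x y = - Ld \<alpha> T n1 n2 (n1 - x) (n2 - y)"
    by (simp add: Ud_def Ld_def Inf_real_def)
qed

end
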